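(* Let $f$ satisfy Assumption (M) with exponent $p>1+\frac2N$. Then there is a constant $C^-=C^-(f,N)>0$ such that for every $\varepsilon\in(0,1]$ and every $L>0$ with $L<C^-\varepsilon^{-\frac{p-1}{2}}$, the solution $u$ of $u_t=\Delta u+f(u)$ on $(0,\infty)\times\mathbb R^N$ with $u(0,x)=\varepsilon\mathbf 1_{B_L}(x)$ satisfies $\|u(t,\cdot)\|_{L^\infty(\mathbb R^N)}=\mathcal O(t^{-N/2})$ as $t\to+\infty$.
   Context: Assumption (M): $f:\mathbb R\to\mathbb R$ is locally Lipschitz continuous, $f=0$ on $(-\infty,0]\cup[1,\infty)$, $f(u)>0$ for all $u\in(0,1)$, and for some $p>1$, $0<\liminf_{u\to0^+}f(u)/u^p\le\limsup_{u\to0^+}f(u)/u^p<+\infty$. $B_L$ is the open ball of radius $L$ centred at $0$ in $\mathbb R^N$. *)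

theory Defs
  imports "HOL-Analysis.Analysis" "HOL-Library.Liminf_Limsup"
begin

definition assumption_M :: "(real \<Rightarrow> real) \<Rightarrow> real \<Rightarrow> bool" where
  "assumption_M f p \<longleftrightarrow>
     (\<forall>x. \<exists>U. open U \<and> x \<in> U \<and> (\<exists>K. K-lipschitz_on U f)) \<and>
     (\<forall>u. u \<le> 0 \<longrightarrow> f u = 0) \<and> (\<forall>u. u \<ge> 1 \<longrightarrow> f u = 0) \<and>
     (\<forall>u. 0 < u \<and> u < 1 \<longrightarrow> f u > 0) \<and>
     p > 1 \<and>
     0 < Liminf (at_right 0) (\<lambda>u. ereal (f u / u powr p)) \<and>
     Limsup (at_right 0) (\<lambda>u. ereal (f u / u powr p)) < \<infinity>"

definition heat_kernel :: "real \<Rightarrow> 'a::euclidean_space \<Rightarrow> real" where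
  "heat_kernel t z = (4 * pi * t) powr (- real DIM('a) / 2) * exp (- (norm z)\<^sup>2 / (4 * t))"

text \<open>(Mild) solution of u_t = Laplacian u + f(u) on (0,oo) x R^N with initial datum u0:
  measurable, bounded on (0,T] x R^N for every T, and satisfying Duhamel's formula.\<close>
definition mild_solution ::
  "(real \<Rightarrow> real) \<Rightarrow> ('a::euclidean_space \<Rightarrow> real) \<Rightarrow> (real \<Rightarrow> 'a \<Rightarrow> real) \<Rightarrow> bool" where
  "mild_solution f u0 u \<longleftrightarrow>
     case_prod u \<in> borel_measurable borel \<and>
     (\<forall>T>0. \<exists>M. \<forall>t\<in>{0<..T}. \<forall>x. \<bar>u t x\<bar> \<le> M) \<and>
     (\<forall>t>0. \<forall>x. u t x =
        (LINT y|lborel. heat_kernel t (x - y) * u0 y) +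
        (LINT s:{0<..<t}|lborel. (LINT y|lborel. heat_kernel (t - s) (x - y) * f (u s y))))"

end

theory Submission
  imports Defs "HOL-Probability.Probability"
begin

text \<open>Let G(t) be the heat kernel and \<beta> = N (p - 1) / 2, so that p > 1 + 2/N means \<beta> > 1.
  The datum \<epsilon> 1_{B_L} lies below \<lambda>/2 G(L^2) for a suitable multiple \<lambda> of \<epsilon> L^N, and we show
  |u(t)| \<le> \<lambda> G(t + L^2), from which the decay t^{-N/2} is read off. Assumption (M) gives
  |f(v)| \<le> C_0 min(|v|, 1)^p; since G(r)^p is a multiple of r^{-\<beta>} G(r/p), the semigroup law bounds
  the Duhamel term by C_0 \<lambda>^p (4\<pi>)^{-\<beta>} G(t + L^2) times \<integral>_0^\<infinity> (s + L^2)^{-\<beta>} ds. This integral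
  converges because \<beta> > 1, and the whole term is at most \<lambda>/2 G(t + L^2) once \<epsilon>^{p-1} L^2 is small.
  As u is only known to be locally bounded, the comparison is reached by iterating the Duhamel
  formula while carrying an error M (C_0 p t)^n / n!, which vanishes as n \<rightarrow> \<infinity>.\<close>

lemma heat_kernel_eq_prod_normal_density:
  fixes z :: "'a::euclidean_space"
  assumes t: "t > 0"
  shows "heat_kernel t z = (\<Prod>b\<in>Basis. normal_density 0 (sqrt (2*t)) (z \<bullet> b))"
proof -
  have nd: "normal_density 0 (sqrt (2*t)) v = (4*pi*t) powr (-1/2) * exp (- v\<^sup>2 / (4*t))" for v
  proof -
    have "sqrt (2 * pi * (sqrt (2*t))\<^sup>2) = sqrt (4*pi*t)" using t by simp
    also have "1 / \<dots> = (4*pi*t) powr (-1/2)" using t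
      by (simp add: powr_minus_divide sqrt_def powr_half_sqrt)
    finally show ?thesis using t unfolding normal_density_def by simp
  qed
  have norm_sq: "(norm z)\<^sup>2 = (\<Sum>b\<in>(Basis::'a set). (z\<bullet>b)\<^sup>2)"
    unfolding power2_norm_eq_inner by (subst euclidean_inner) (simp add: power2_eq_square)
  have "(\<Prod>b\<in>Basis. normal_density 0 (sqrt (2*t)) (z \<bullet> b))
      = (\<Prod>b\<in>(Basis::'a set). (4*pi*t) powr (-1/2)) * (\<Prod>b\<in>Basis. exp (- (z\<bullet>b)\<^sup>2 / (4*t)))"
    by (simp add: nd prod.distrib)
  also have "(\<Prod>b\<in>(Basis::'a set). (4*pi*t) powr (-1/2)) = (4*pi*t) powr (- real DIM('a) / 2)"
    using t by (simp add: powr_realpow[symmetric] powr_powr)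
  also have "(\<Prod>b\<in>(Basis::'a set). exp (- (z\<bullet>b)\<^sup>2 / (4*t))) = exp (- (norm z)\<^sup>2 / (4*t))"
    by (simp add: exp_sum[symmetric] norm_sq sum_divide_distrib[symmetric] sum_negf)
  finally show ?thesis unfolding heat_kernel_def by simp
qed

lemma heat_kernel_nonneg: "0 \<le> heat_kernel t z"
  unfolding heat_kernel_def by simp

lemma borel_measurable_heat_kernel[measurable]:
  "heat_kernel t \<in> borel_measurable (borel :: 'a::euclidean_space measure)"
  unfolding heat_kernel_def by measurable

lemma nn_integral_heat_kernel_convolution:
  fixes x :: "'a::euclidean_space"
  assumes a: "a > 0" and b: "b > 0"
  shows "(\<integral>\<^sup>+y. ennreal (heat_kernel a (x - y) * heat_kernel b y) \<partial>lborel) = ennreal (heat_kernel (a+b) x)"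
proof -
  define h where "h c v = normal_density 0 (sqrt (2*a)) (x \<bullet> c - v) * normal_density 0 (sqrt (2*b)) v" for c v
  have eq: "heat_kernel a (x - y) * heat_kernel b y = (\<Prod>c\<in>Basis. h c (y \<bullet> c))" for y
    using a b by (simp add: heat_kernel_eq_prod_normal_density h_def prod.distrib inner_diff_left)
  have "(\<integral>\<^sup>+y. ennreal (heat_kernel a (x - y) * heat_kernel b y) \<partial>lborel)
     = (\<Prod>c\<in>(Basis::'a set). (\<integral>\<^sup>+v. h c v \<partial>lborel))"
    unfolding eq by (subst prod_ennreal[symmetric]) (auto simp: h_def intro!: nn_integral_lborel_prod)
  also have "\<dots> = (\<Prod>c\<in>(Basis::'a set). ennreal (normal_density 0 (sqrt (2*(a+b))) (x \<bullet> c)))"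
  proof (rule prod.cong[OF refl])
    fix c :: 'a
    have "(\<integral>\<^sup>+v. h c v \<partial>lborel) = normal_density 0 (sqrt ((sqrt (2*a))\<^sup>2 + (sqrt (2*b))\<^sup>2)) (x \<bullet> c)"
      unfolding h_def using fun_cong[OF conv_normal_density_zero_mean[of "sqrt (2*a)" "sqrt (2*b)"], of "x \<bullet> c"] a b
      by simp
    also have "(sqrt (2*a))\<^sup>2 + (sqrt (2*b))\<^sup>2 = 2*(a+b)" using a b by simp
    finally show "(\<integral>\<^sup>+v. h c v \<partial>lborel) = ennreal (normal_density 0 (sqrt (2*(a+b))) (x \<bullet> c))" .
  qed
  also have "\<dots> = ennreal (heat_kernel (a+b) x)"
    using a b by (simp add: heat_kernel_eq_prod_normal_density prod_ennreal)
  finally show ?thesis .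
qed

lemma nn_integral_heat_kernel:
  fixes x :: "'a::euclidean_space"
  assumes a: "a > 0"
  shows "(\<integral>\<^sup>+y. ennreal (heat_kernel a (x - y)) \<partial>lborel) = 1"
proof -
  define h where "h c v = normal_density (x \<bullet> c) (sqrt (2*a)) v" for c v
  have eq: "heat_kernel a (x - y) = (\<Prod>c\<in>Basis. h c (y \<bullet> c))" for y
    using a by (simp add: heat_kernel_eq_prod_normal_density h_def inner_diff_left normal_density_def power2_commute)
  have "(\<integral>\<^sup>+y. ennreal (heat_kernel a (x - y)) \<partial>lborel) = (\<Prod>c\<in>(Basis::'a set). (\<integral>\<^sup>+v. h c v \<partial>lborel))"
    unfolding eq by (subst prod_ennreal[symmetric]) (auto simp: h_def intro!: nn_integral_lborel_prod)
  also have "\<dots> = (\<Prod>c\<in>(Basis::'a set). 1)"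
    using a by (intro prod.cong refl) (simp add: h_def nn_integral_eq_integral)
  finally show ?thesis by simp
qed

lemma has_bochner_integral_heat_kernel_convolution:
  fixes x :: "'a::euclidean_space"
  assumes "a > 0" and "b > 0"
  shows "has_bochner_integral lborel (\<lambda>y. heat_kernel a (x - y) * heat_kernel b y) (heat_kernel (a+b) x)"
  using assms
  by (intro has_bochner_integral_nn_integral) (auto simp: heat_kernel_nonneg nn_integral_heat_kernel_convolution)

lemma has_bochner_integral_heat_kernel:
  fixes x :: "'a::euclidean_space"
  assumes "a > 0"
  shows "has_bochner_integral lborel (\<lambda>y. heat_kernel a (x - y)) 1"
  using assms by (intro has_bochner_integral_nn_integral) (auto simp: heat_kernel_nonneg nn_integral_heat_kernel)

lemma heat_kernel_le_time_decay:
  fixes x :: "'a::euclidean_space"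
  assumes t: "t > 0" and \<tau>: "\<tau> \<ge> 0"
  shows "heat_kernel (t + \<tau>) x \<le> (4*pi) powr (- real DIM('a) / 2) * t powr (- real DIM('a) / 2)"
proof -
  have "heat_kernel (t + \<tau>) x \<le> (4*pi*(t + \<tau>)) powr (- real DIM('a) / 2)"
    unfolding heat_kernel_def using t \<tau> by (intro mult_left_le) auto
  also have "\<dots> \<le> (4*pi*t) powr (- real DIM('a) / 2)"
    using t \<tau> by (intro powr_mono2') auto
  finally show ?thesis using t by (simp add: powr_mult)
qed

lemma heat_kernel_le_rescaled:
  fixes x :: "'a::euclidean_space"
  assumes s: "0 < \<sigma>" "\<sigma> \<le> \<rho>" "\<rho> \<le> q * \<sigma>"
  shows "heat_kernel \<sigma> x \<le> q powr (real DIM('a) / 2) * heat_kernel \<rho> x"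
proof -
  have r: "\<rho> > 0" using s by linarith
  then have q: "q > 0" using s zero_less_mult_pos2[of q \<sigma>] by linarith
  have "(4*pi*\<sigma>) powr (- real DIM('a) / 2) \<le> (4*pi*\<rho>/q) powr (- real DIM('a) / 2)"
    using s q r by (intro powr_mono2') (auto simp: field_simps)
  also have "\<dots> = q powr (real DIM('a) / 2) * (4*pi*\<rho>) powr (- real DIM('a) / 2)"
    using q r by (simp add: powr_divide powr_minus_divide divide_simps)
  finally have 1: "(4*pi*\<sigma>) powr (- real DIM('a) / 2) \<le> q powr (real DIM('a) / 2) * (4*pi*\<rho>) powr (- real DIM('a) / 2)" .
  have 2: "exp (- (norm x)\<^sup>2 / (4 * \<sigma>)) \<le> exp (- (norm x)\<^sup>2 / (4 * \<rho>))"
    using s r by (auto intro!: divide_left_mono mult_pos_pos)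
  show ?thesis
    using mult_mono[OF 1 2] unfolding heat_kernel_def by (simp add: mult.assoc)
qed

lemma heat_kernel_powr:
  fixes y :: "'a::euclidean_space"
  assumes r: "r > 0" and q: "q > 0"
  shows "heat_kernel r y powr q
    = (4*pi*r) powr (- real DIM('a) * (q - 1) / 2) * q powr (- real DIM('a) / 2) * heat_kernel (r/q) y"
proof -
  let ?N = "real DIM('a)"
  have "heat_kernel r y powr q = ((4*pi*r) powr (- ?N / 2)) powr q * exp (- (norm y)\<^sup>2 / (4 * r)) powr q"
    unfolding heat_kernel_def by (simp add: powr_mult)
  also have "\<dots> = (4*pi*r) powr (- ?N * q / 2) * exp (- q * (norm y)\<^sup>2 / (4 * r))"
    by (simp add: powr_powr powr_def)
  also have "(4*pi*r) powr (- ?N * q / 2) = (4*pi*r) powr (- ?N * (q - 1) / 2) * (4*pi*r) powr (- ?N / 2)"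
    by (simp add: powr_add[symmetric] field_simps)
  also have "(4*pi*r) powr (- ?N / 2) = q powr (- ?N / 2) * (4*pi*(r/q)) powr (- ?N / 2)"
    using r q by (simp add: powr_divide powr_minus_divide divide_simps)
  also have "- q * (norm y)\<^sup>2 / (4 * r) = - (norm y)\<^sup>2 / (4 * (r/q))"
    using q by simp
  finally show ?thesis unfolding heat_kernel_def by (simp add: algebra_simps)
qed

lemma indicator_ball_le_heat_kernel:
  fixes y :: "'a::euclidean_space"
  assumes L: "L > 0"
  shows "indicator (ball 0 L) y \<le> exp (1/4) * (4*pi*L\<^sup>2) powr (real DIM('a) / 2) * heat_kernel (L\<^sup>2) y"
proof (cases "y \<in> ball 0 L")
  case True
  then have "(norm y)\<^sup>2 \<le> L\<^sup>2" using L by (intro power_mono) auto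
  then have "exp (-1/4) \<le> exp (- (norm y)\<^sup>2 / (4 * L\<^sup>2))" using L by (simp add: divide_simps)
  moreover have "exp (1/4) * (4*pi*L\<^sup>2) powr (real DIM('a) / 2) * heat_kernel (L\<^sup>2) y
      = exp (1/4) * exp (- (norm y)\<^sup>2 / (4 * L\<^sup>2))"
    unfolding heat_kernel_def using L by (simp add: powr_minus_divide)
  ultimately show ?thesis using True by (simp add: exp_add[symmetric] exp_minus_inverse)
next
  case False
  then show ?thesis using L by (simp add: heat_kernel_nonneg)
qed

text \<open>No integrability of \<open>g\<close> is required (a non-integrable function has integral 0), so the
  Duhamel integrals of a mild solution can be estimated without knowing they converge.\<close>

lemma abs_integral_le_integral:
  fixes g h :: "'b \<Rightarrow> real"
  assumes h: "integrable M h" and gh: "\<And>x. x \<in> space M \<Longrightarrow> \<bar>g x\<bar> \<le> h x"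
  shows "\<bar>LINT x|M. g x\<bar> \<le> LINT x|M. h x"
proof -
  have "g x \<le> h x" "- g x \<le> h x" "0 \<le> h x" if "x \<in> space M" for x
    using gh[OF that] by linarith+
  then have "(LINT x|M. g x) \<le> LINT x|M. h x" "(LINT x|M. - g x) \<le> LINT x|M. h x"
    by (intro integral_mono'[OF h]; simp)+
  then show ?thesis by simp
qed

lemma abs_set_integral_le_set_integral:
  fixes g h :: "real \<Rightarrow> real"
  assumes "set_integrable lborel A h" and "\<And>x. x \<in> A \<Longrightarrow> \<bar>g x\<bar> \<le> h x"
  shows "\<bar>LINT x:A|lborel. g x\<bar> \<le> (LINT x:A|lborel. h x)"
  unfolding set_lebesgue_integral_def using assms
  by (intro abs_integral_le_integral) (auto simp: set_integrable_def indicator_def)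

lemma set_integral_Ioo_FTC:
  fixes g F :: "real \<Rightarrow> real"
  assumes t: "0 \<le> t" and c: "continuous_on {0..t} g"
    and d: "\<And>x. 0 \<le> x \<Longrightarrow> x \<le> t \<Longrightarrow> (F has_real_derivative g x) (at x within {0..t})"
  shows "set_integrable lborel {0<..<t} g" "(LINT s:{0<..<t}|lborel. g s) = F t - F 0"
proof -
  have "interval_lebesgue_integrable lborel 0 t g"
    using interval_integrable_continuous_on[OF t c] by (simp add: zero_ereal_def)
  then show "set_integrable lborel {0<..<t} g"
    using t by (simp add: interval_lebesgue_integrable_def zero_ereal_def)
  have "(LBINT x=ereal 0..ereal t. g x) = F t - F 0"
    using t c d
    by (intro interval_integral_FTC_finite) (auto simp: has_real_derivative_iff_has_vector_derivative[symmetric])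
  then show "(LINT s:{0<..<t}|lborel. g s) = F t - F 0"
    using t by (simp add: interval_lebesgue_integral_le_eq)
qed

lemma set_integral_shifted_powr_plus_power:
  fixes A B \<beta> \<tau> t :: real and n :: nat
  assumes t: "0 \<le> t" and \<tau>: "0 < \<tau>" and \<beta>: "\<beta> \<noteq> 1"
  shows "set_integrable lborel {0<..<t} (\<lambda>s. A * (s + \<tau>) powr (-\<beta>) + B * s ^ n)"
    "(LINT s:{0<..<t}|lborel. A * (s + \<tau>) powr (-\<beta>) + B * s ^ n)
       = A * (\<tau> powr (1 - \<beta>) - (t + \<tau>) powr (1 - \<beta>)) / (\<beta> - 1) + B * t ^ Suc n / real (Suc n)"
proof -
  define h where "h s = A * (s + \<tau>) powr (-\<beta>) + B * s ^ n" for s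
  define F where "F s = A * ((s + \<tau>) powr (1 - \<beta>) / (1 - \<beta>)) + B * (s ^ Suc n / real (Suc n))" for s
  have "continuous_on {0..t} h"
    unfolding h_def using \<tau> by (intro continuous_intros) auto
  moreover have "(F has_real_derivative h s) (at s within {0..t})" if "0 \<le> s" for s
  proof -
    have "(F has_real_derivative A * ((1 - \<beta>) * (s + \<tau>) powr (1 - \<beta> - 1) / (1 - \<beta>))
        + B * (real (Suc n) * s ^ n / real (Suc n))) (at s within {0..t})"
      unfolding F_def using that \<tau> \<beta> by (intro derivative_eq_intros refl) auto
    then show ?thesis using \<beta> unfolding h_def by simp
  qed
  ultimately have "set_integrable lborel {0<..<t} h" "(LINT s:{0<..<t}|lborel. h s) = F t - F 0"
    using set_integral_Ioo_FTC[OF t] by blast+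
  moreover have "F t - F 0 = A * (\<tau> powr (1 - \<beta>) - (t + \<tau>) powr (1 - \<beta>)) / (\<beta> - 1) + B * t ^ Suc n / real (Suc n)"
  proof -
    have "F t - F 0 = A * ((t + \<tau>) powr (1 - \<beta>) - \<tau> powr (1 - \<beta>)) / (1 - \<beta>) + B * t ^ Suc n / real (Suc n)"
      unfolding F_def by (simp add: diff_divide_distrib algebra_simps)
    also have "A * ((t + \<tau>) powr (1 - \<beta>) - \<tau> powr (1 - \<beta>)) / (1 - \<beta>)
        = A * (\<tau> powr (1 - \<beta>) - (t + \<tau>) powr (1 - \<beta>)) / (\<beta> - 1)"
      by (metis minus_diff_eq minus_divide_divide mult_minus_right)
    finally show ?thesis .
  qed
  ultimately show "set_integrable lborel {0<..<t} (\<lambda>s. A * (s + \<tau>) powr (-\<beta>) + B * s ^ n)"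
    "(LINT s:{0<..<t}|lborel. A * (s + \<tau>) powr (-\<beta>) + B * s ^ n)
       = A * (\<tau> powr (1 - \<beta>) - (t + \<tau>) powr (1 - \<beta>)) / (\<beta> - 1) + B * t ^ Suc n / real (Suc n)"
    unfolding h_def[abs_def] by simp_all
qed

lemma min_one_powr_lipschitz:
  fixes a b q :: real
  assumes ab: "0 \<le> a" "a \<le> b" and q: "q \<ge> 1"
  shows "min b 1 powr q \<le> min a 1 powr q + q * (b - a)"
proof -
  define a' b' where "a' = min a 1" and "b' = min b 1"
  have h: "0 \<le> a'" "a' \<le> b'" "b' \<le> 1" "b' - a' \<le> b - a" using ab unfolding a'_def b'_def by auto
  have "b' powr q - a' powr q \<le> q * (b' - a')"
  proof (cases "a' = 0")
    case True
    have "b' powr q \<le> b'" using h q by (cases "b' = 0") (auto intro: powr_le_one_le)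
    also have "b' \<le> q * b'" using q h by (simp add: mult_le_cancel_right1)
    finally show ?thesis using True by simp
  next
    case False
    then have a0: "a' > 0" using h by auto
    show ?thesis
    proof (cases "a' = b'")
      case False
      then have "a' < b'" using h by auto
      moreover have "((\<lambda>x. x powr q) has_real_derivative q * x powr (q-1)) (at x)" if "a' \<le> x" for x
        using a0 that by (intro has_real_derivative_powr) auto
      ultimately obtain z where z: "a' < z" "z < b'" "b' powr q - a' powr q = (b' - a') * (q * z powr (q - 1))"
        using MVT2[of a' b' "\<lambda>x. x powr q" "\<lambda>x. q * x powr (q-1)"] by blast
      have "z powr (q - 1) \<le> 1" using z h q a0 by (intro powr_le1) auto
      then show ?thesis using z q h by (simp add: mult_left_le)
    qed simp
  qed
  then show ?thesis using h q unfolding a'_def b'_def by (smt (verit, best) mult_left_mono)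
qed

lemma min_one_powr_le_powr_add:
  fixes a d v q :: real
  assumes "0 \<le> a" "0 \<le> d" "0 \<le> v" "v \<le> a + d" "q \<ge> 1"
  shows "min v 1 powr q \<le> a powr q + q * d"
proof -
  define b where "b = max v a"
  have "min v 1 powr q \<le> min b 1 powr q"
    using assms unfolding b_def by (intro powr_mono2) auto
  also have "\<dots> \<le> min a 1 powr q + q * (b - a)"
    using assms unfolding b_def by (intro min_one_powr_lipschitz) auto
  also have "min a 1 powr q \<le> a powr q"
    using assms by (intro powr_mono2) auto
  also have "q * (b - a) \<le> q * d"
    using assms unfolding b_def by (intro mult_left_mono) auto
  finally show ?thesis by simp
qed

lemma assumption_M_continuous:
  assumes "assumption_M f p"
  shows "continuous_on UNIV f"
proof -
  have "isCont f x" for x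
  proof -
    obtain U K where "open U" "x \<in> U" "K-lipschitz_on U f"
      using assms unfolding assumption_M_def by blast
    then show ?thesis
      using lipschitz_on_continuous_on continuous_on_eq_continuous_at by blast
  qed
  then show ?thesis by (simp add: continuous_at_imp_continuous_on)
qed

lemma assumption_M_growth_bound:
  assumes M: "assumption_M f p"
  obtains C0 where "C0 > 0" "\<And>v. \<bar>f v\<bar> \<le> C0 * min \<bar>v\<bar> 1 powr p"
proof -
  from M have pos: "\<And>u. 0 < u \<and> u < 1 \<Longrightarrow> f u > 0"
    and vanish: "\<And>u. u \<le> 0 \<or> u \<ge> 1 \<Longrightarrow> f u = 0" and p: "p > 1"
    unfolding assumption_M_def by auto
  obtain n :: nat where "Limsup (at_right 0) (\<lambda>u. ereal (f u / u powr p)) < ereal (real n)"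
    using M less_PInf_Ex_of_nat unfolding assumption_M_def by auto
  then have "eventually (\<lambda>u. ereal (f u / u powr p) < ereal (real n)) (at_right 0)"
    by (rule Limsup_lessD)
  then obtain \<delta>0 where "\<delta>0 > 0" and \<delta>0: "\<And>u. 0 < u \<Longrightarrow> u < \<delta>0 \<Longrightarrow> f u / u powr p < real n"
    unfolding eventually_at_right_field by auto
  define \<delta> where "\<delta> = min \<delta>0 1"
  have \<delta>: "0 < \<delta>" "\<delta> \<le> 1" using \<open>\<delta>0 > 0\<close> unfolding \<delta>_def by auto
  have near0: "f u \<le> real n * u powr p" if "0 < u" "u < \<delta>" for u
    using \<delta>0[of u] that unfolding \<delta>_def by (simp add: divide_less_eq)
  have "compact (f ` {\<delta>..1})"
    using assumption_M_continuous[OF M] by (intro compact_continuous_image) (auto intro: continuous_on_subset)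
  then obtain B where B: "\<And>u. u \<in> {\<delta>..1} \<Longrightarrow> \<bar>f u\<bar> \<le> B"
    using compact_imp_bounded bounded_iff by (metis image_eqI real_norm_def)
  define C0 where "C0 = max 1 (max (real n) (B / \<delta> powr p))"
  have "\<bar>f u\<bar> \<le> C0 * min \<bar>u\<bar> 1 powr p" for u
  proof (cases "0 < u \<and> u < 1")
    case u: True
    then have fu: "\<bar>f u\<bar> = f u" and m: "min \<bar>u\<bar> 1 = u" using pos[OF u] by auto
    show ?thesis
    proof (cases "u < \<delta>")
      case True
      then have "f u \<le> real n * u powr p" using near0 u by auto
      also have "\<dots> \<le> C0 * u powr p" unfolding C0_def by (intro mult_right_mono) auto
      finally show ?thesis using fu m by simp
    next
      case False
      then have "f u \<le> B" and "\<delta> powr p \<le> u powr p" using B[of u] u \<delta> p by (auto intro: powr_mono2)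
      moreover have "B = (B / \<delta> powr p) * \<delta> powr p" and "B \<ge> 0"
        using \<delta> B[of u] False u by auto
      ultimately have "f u \<le> (B / \<delta> powr p) * u powr p"
        by (metis order_trans mult_left_mono zero_le_divide_iff powr_ge_zero)
      also have "\<dots> \<le> C0 * u powr p" unfolding C0_def by (intro mult_right_mono) auto
      finally show ?thesis using fu m by simp
    qed
  next
    case False
    then show ?thesis using vanish[of u] unfolding C0_def by auto
  qed
  then show thesis using that[of C0] unfolding C0_def by simp
qed

lemma abs_heat_semigroup_le_heat_kernel:
  fixes u0 :: "'a::euclidean_space \<Rightarrow> real"
  assumes t: "t > 0" and \<tau>: "\<tau> > 0" and u0: "\<And>y. \<bar>u0 y\<bar> \<le> \<mu> * heat_kernel \<tau> y"
  shows "\<bar>LINT y|lborel. heat_kernel t (x - y) * u0 y\<bar> \<le> \<mu> * heat_kernel (t + \<tau>) x"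
proof -
  have hb: "has_bochner_integral lborel (\<lambda>y. \<mu> * (heat_kernel t (x - y) * heat_kernel \<tau> y)) (\<mu> * heat_kernel (t + \<tau>) x)"
    using t \<tau> by (intro has_bochner_integral_mult_right has_bochner_integral_heat_kernel_convolution)
  have "\<bar>heat_kernel t (x - y) * u0 y\<bar> \<le> \<mu> * (heat_kernel t (x - y) * heat_kernel \<tau> y)" for y
    using mult_left_mono[OF u0[of y] heat_kernel_nonneg[of t "x - y"]]
    by (simp add: abs_mult heat_kernel_nonneg algebra_simps)
  then have "\<bar>LINT y|lborel. heat_kernel t (x - y) * u0 y\<bar>
      \<le> LINT y|lborel. \<mu> * (heat_kernel t (x - y) * heat_kernel \<tau> y)"
    by (intro abs_integral_le_integral[OF integrable.intros[OF hb]])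
  also have "\<dots> = \<mu> * heat_kernel (t + \<tau>) x"
    by (rule has_bochner_integral_integral_eq[OF hb])
  finally show ?thesis .
qed

lemma abs_heat_semigroup_nonlinearity_le:
  fixes v :: "'a::euclidean_space \<Rightarrow> real"
  assumes C0: "C0 > 0" and f: "\<And>w. \<bar>f w\<bar> \<le> C0 * min \<bar>w\<bar> 1 powr p" and p: "p > 1"
    and \<beta>: "\<beta> = real DIM('a) * (p - 1) / 2"
    and \<sigma>: "\<sigma> > 0" and r: "r > 0" and lam: "lam \<ge> 0" and d: "d \<ge> 0"
    and v: "\<And>y. \<bar>v y\<bar> \<le> lam * heat_kernel r y + d"
  shows "\<bar>LINT y|lborel. heat_kernel \<sigma> (x - y) * f (v y)\<bar>
     \<le> C0 * lam powr p * (4*pi*r) powr (-\<beta>) * heat_kernel (\<sigma> + r) x + C0 * p * d"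
proof -
  let ?N = "real DIM('a)"
  define k where "k = (4*pi*r) powr (-\<beta>) * p powr (- ?N / 2)"
  have rp: "r / p > 0" using r p by simp
  then have hb: "has_bochner_integral lborel
     (\<lambda>y. C0 * lam powr p * k * (heat_kernel \<sigma> (x - y) * heat_kernel (r/p) y) + C0 * p * d * heat_kernel \<sigma> (x - y))
     (C0 * lam powr p * k * heat_kernel (\<sigma> + r/p) x + C0 * p * d * 1)"
    using \<sigma> by (intro has_bochner_integral_add has_bochner_integral_mult_right
        has_bochner_integral_heat_kernel_convolution has_bochner_integral_heat_kernel)
  have "\<bar>heat_kernel \<sigma> (x - y) * f (v y)\<bar>
      \<le> C0 * lam powr p * k * (heat_kernel \<sigma> (x - y) * heat_kernel (r/p) y) + C0 * p * d * heat_kernel \<sigma> (x - y)" for y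
  proof -
    have "min \<bar>v y\<bar> 1 powr p \<le> (lam * heat_kernel r y) powr p + p * d"
      using v[of y] lam d p by (intro min_one_powr_le_powr_add) (auto simp: heat_kernel_nonneg)
    also have "(lam * heat_kernel r y) powr p = lam powr p * k * heat_kernel (r/p) y"
      using lam p heat_kernel_powr[OF r, of p y] unfolding k_def \<beta> by (simp add: powr_mult heat_kernel_nonneg)
    finally have "\<bar>f (v y)\<bar> \<le> C0 * (lam powr p * k * heat_kernel (r/p) y + p * d)"
      using f[of "v y"] C0 by (meson mult_left_mono order_trans less_imp_le)
    from mult_left_mono[OF this heat_kernel_nonneg[of \<sigma> "x - y"]]
    show ?thesis by (simp add: abs_mult heat_kernel_nonneg algebra_simps)
  qed
  then have "\<bar>LINT y|lborel. heat_kernel \<sigma> (x - y) * f (v y)\<bar>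
      \<le> LINT y|lborel. C0 * lam powr p * k * (heat_kernel \<sigma> (x - y) * heat_kernel (r/p) y)
          + C0 * p * d * heat_kernel \<sigma> (x - y)"
    by (intro abs_integral_le_integral[OF integrable.intros[OF hb]])
  also have "\<dots> = C0 * lam powr p * k * heat_kernel (\<sigma> + r/p) x + C0 * p * d"
    using has_bochner_integral_integral_eq[OF hb] by simp
  also have "k * heat_kernel (\<sigma> + r/p) x \<le> (4*pi*r) powr (-\<beta>) * heat_kernel (\<sigma> + r) x"
  proof -
    have "r / p \<le> r" "\<sigma> \<le> p * \<sigma>" using r p \<sigma> by (simp_all add: divide_simps)
    then have "heat_kernel (\<sigma> + r/p) x \<le> p powr (?N / 2) * heat_kernel (\<sigma> + r) x"
      using \<sigma> rp p by (intro heat_kernel_le_rescaled) (auto simp: distrib_left)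
    moreover have "k \<ge> 0" unfolding k_def by simp
    ultimately have "k * heat_kernel (\<sigma> + r/p) x \<le> k * (p powr (?N / 2) * heat_kernel (\<sigma> + r) x)"
      by (rule mult_left_mono)
    also have "\<dots> = (4*pi*r) powr (-\<beta>) * (p powr (- ?N / 2) * p powr (?N / 2)) * heat_kernel (\<sigma> + r) x"
      unfolding k_def by (simp only: ac_simps)
    also have "p powr (- ?N / 2) * p powr (?N / 2) = 1"
      using p by (simp add: powr_add[symmetric])
    finally show ?thesis by simp
  qed
  then have "C0 * lam powr p * k * heat_kernel (\<sigma> + r/p) x
      \<le> C0 * lam powr p * ((4*pi*r) powr (-\<beta>) * heat_kernel (\<sigma> + r) x)"
    using C0 by (simp add: mult.assoc mult_left_mono)
  finally show ?thesis by (simp add: mult.assoc)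
qed

lemma mild_solution_iteration_step:
  fixes u :: "real \<Rightarrow> 'a::euclidean_space \<Rightarrow> real" and u0 :: "'a \<Rightarrow> real"
  assumes C0: "C0 > 0" and f: "\<And>w. \<bar>f w\<bar> \<le> C0 * min \<bar>w\<bar> 1 powr p" and p: "p > 1"
    and \<beta>: "\<beta> = real DIM('a) * (p - 1) / 2" "\<beta> > 1"
    and \<tau>: "\<tau> > 0" and lam: "lam \<ge> 0" and u0: "\<And>y. \<bar>u0 y\<bar> \<le> lam / 2 * heat_kernel \<tau> y"
    and small: "C0 * lam powr p * (4*pi) powr (-\<beta>) * \<tau> powr (1 - \<beta>) / (\<beta> - 1) \<le> lam / 2"
    and t: "t > 0"
    and duhamel: "u t x = (LINT y|lborel. heat_kernel t (x - y) * u0 y)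
       + (LINT s:{0<..<t}|lborel. (LINT y|lborel. heat_kernel (t - s) (x - y) * f (u s y)))"
    and c: "c \<ge> 0"
    and earlier: "\<And>s y. 0 < s \<Longrightarrow> s < t \<Longrightarrow> \<bar>u s y\<bar> \<le> lam * heat_kernel (s + \<tau>) y + c * s ^ n"
  shows "\<bar>u t x\<bar> \<le> lam * heat_kernel (t + \<tau>) x + C0 * p * c * t ^ Suc n / real (Suc n)"
proof -
  define G where "G = heat_kernel (t + \<tau>) x"
  define A where "A = C0 * lam powr p * (4*pi) powr (-\<beta>) * G"
  have G: "G \<ge> 0" and A: "A \<ge> 0" unfolding A_def G_def using C0 by (simp_all add: heat_kernel_nonneg)
  have linear: "\<bar>LINT y|lborel. heat_kernel t (x - y) * u0 y\<bar> \<le> lam / 2 * G"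
    unfolding G_def by (rule abs_heat_semigroup_le_heat_kernel[OF t \<tau> u0])
  have inner: "\<bar>LINT y|lborel. heat_kernel (t - s) (x - y) * f (u s y)\<bar>
      \<le> A * (s + \<tau>) powr (-\<beta>) + C0 * p * c * s ^ n" if s: "s \<in> {0<..<t}" for s
  proof -
    have "\<bar>LINT y|lborel. heat_kernel (t - s) (x - y) * f (u s y)\<bar>
        \<le> C0 * lam powr p * (4*pi*(s + \<tau>)) powr (-\<beta>) * heat_kernel (t - s + (s + \<tau>)) x + C0 * p * (c * s ^ n)"
      using s \<tau> c earlier
      by (intro abs_heat_semigroup_nonlinearity_le[OF C0 f p \<beta>(1) _ _ lam]) (auto simp: add_pos_nonneg)
    moreover have "(4*pi*(s + \<tau>)) powr (-\<beta>) = (4*pi) powr (-\<beta>) * (s + \<tau>) powr (-\<beta>)"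
      by (simp add: powr_mult)
    ultimately show ?thesis
      unfolding A_def G_def by (simp add: algebra_simps)
  qed
  note time_integral = set_integral_shifted_powr_plus_power[OF less_imp_le[OF t] \<tau>, of \<beta> A "C0 * p * c" n]
  have "\<bar>LINT s:{0<..<t}|lborel. (LINT y|lborel. heat_kernel (t - s) (x - y) * f (u s y))\<bar>
      \<le> A * (\<tau> powr (1 - \<beta>) - (t + \<tau>) powr (1 - \<beta>)) / (\<beta> - 1) + C0 * p * c * t ^ Suc n / real (Suc n)"
    using abs_set_integral_le_set_integral[OF time_integral(1) inner] time_integral(2) \<beta>(2) by simp
  also have "A * (\<tau> powr (1 - \<beta>) - (t + \<tau>) powr (1 - \<beta>)) / (\<beta> - 1) \<le> A * \<tau> powr (1 - \<beta>) / (\<beta> - 1)"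
    using A \<beta>(2) by (intro divide_right_mono mult_left_mono) auto
  also have "A * \<tau> powr (1 - \<beta>) / (\<beta> - 1) = C0 * lam powr p * (4*pi) powr (-\<beta>) * \<tau> powr (1 - \<beta>) / (\<beta> - 1) * G"
    unfolding A_def by simp
  also have "\<dots> \<le> lam / 2 * G"
    using small G by (rule mult_right_mono)
  finally show ?thesis
    using linear duhamel unfolding G_def by linarith
qed

lemma mild_solution_le_heat_kernel:
  fixes u :: "real \<Rightarrow> 'a::euclidean_space \<Rightarrow> real" and u0 :: "'a \<Rightarrow> real"
  assumes C0: "C0 > 0" and f: "\<And>w. \<bar>f w\<bar> \<le> C0 * min \<bar>w\<bar> 1 powr p" and p: "p > 1"
    and \<beta>: "\<beta> = real DIM('a) * (p - 1) / 2" "\<beta> > 1"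
    and \<tau>: "\<tau> > 0" and lam: "lam \<ge> 0" and u0: "\<And>y. \<bar>u0 y\<bar> \<le> lam / 2 * heat_kernel \<tau> y"
    and small: "C0 * lam powr p * (4*pi) powr (-\<beta>) * \<tau> powr (1 - \<beta>) / (\<beta> - 1) \<le> lam / 2"
    and u: "mild_solution f u0 u" and t: "t > 0"
  shows "\<bar>u t x\<bar> \<le> lam * heat_kernel (t + \<tau>) x"
proof -
  obtain M where M: "\<And>s y. s \<in> {0<..t} \<Longrightarrow> \<bar>u s y\<bar> \<le> M"
    using u t unfolding mild_solution_def by blast
  have M0: "M \<ge> 0" using M[of t x] t by auto
  have approx: "\<bar>u s y\<bar> \<le> lam * heat_kernel (s + \<tau>) y + M * (C0 * p) ^ n * s ^ n / fact n"
    if "s \<in> {0<..t}" for n s y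
    using that
  proof (induction n arbitrary: s y)
    case 0
    then show ?case using M[of s y] lam heat_kernel_nonneg[of "s + \<tau>" y] by (simp add: add_increasing)
  next
    case (Suc n)
    let ?c = "M * (C0 * p) ^ n / fact n"
    have "\<bar>u s y\<bar> \<le> lam * heat_kernel (s + \<tau>) y + C0 * p * ?c * s ^ Suc n / real (Suc n)"
    proof (rule mild_solution_iteration_step[OF C0 f p \<beta> \<tau> lam u0 small])
      show "s > 0" using Suc.prems by simp
      then show "u s y = (LINT y'|lborel. heat_kernel s (y - y') * u0 y')
          + (LINT s':{0<..<s}|lborel. (LINT y'|lborel. heat_kernel (s - s') (y - y') * f (u s' y')))"
        using u unfolding mild_solution_def by blast
      show "?c \<ge> 0" using M0 C0 p by simp
      fix s' y'
      assume "0 < s'" "s' < s"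
      then show "\<bar>u s' y'\<bar> \<le> lam * heat_kernel (s' + \<tau>) y' + ?c * s' ^ n"
        using Suc.IH[of s' y'] Suc.prems by simp
    qed
    also have "C0 * p * ?c * s ^ Suc n / real (Suc n) = M * (C0 * p) ^ Suc n * s ^ Suc n / fact (Suc n)"
      by (simp add: field_simps)
    finally show ?case .
  qed
  have "(\<lambda>n. lam * heat_kernel (t + \<tau>) x + M * (inverse (fact n) * (C0 * p * t) ^ n))
      \<longlonglongrightarrow> lam * heat_kernel (t + \<tau>) x + M * 0"
    by (intro tendsto_intros summable_LIMSEQ_zero[OF summable_exp])
  moreover have "\<bar>u t x\<bar> \<le> lam * heat_kernel (t + \<tau>) x + M * (inverse (fact n) * (C0 * p * t) ^ n)" for n
    using approx[where s=t and n=n and y=x] t by (simp add: power_mult_distrib field_simps)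
  ultimately show ?thesis
    by (intro LIMSEQ_le_const) auto
qed

lemma gaussian_amplitude_small:
  fixes \<beta> \<epsilon> E L N p C0 :: real
  assumes \<beta>: "\<beta> = N * (p - 1) / 2" "\<beta> > 1" and \<epsilon>: "\<epsilon> > 0" and L: "L > 0" and E: "E > 0"
    and cond: "C0 * E powr (p - 1) * (\<epsilon> powr (p - 1) * L\<^sup>2) \<le> (\<beta> - 1) / 2"
  defines "lam \<equiv> E * \<epsilon> * (4*pi*L\<^sup>2) powr (N/2)"
  shows "C0 * lam powr p * (4*pi) powr (-\<beta>) * (L\<^sup>2) powr (1 - \<beta>) / (\<beta> - 1) \<le> lam / 2"
proof -
  have lam: "lam > 0" unfolding lam_def using \<epsilon> L E by simp
  have "lam powr p = lam powr 1 * lam powr (p - 1)"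
    unfolding powr_add[symmetric] by simp
  also have "\<dots> = lam * lam powr (p - 1)"
    using lam by simp
  also have "lam powr (p - 1) = E powr (p - 1) * \<epsilon> powr (p - 1) * ((4*pi) powr \<beta> * (L\<^sup>2) powr \<beta>)"
    unfolding lam_def using E \<epsilon> by (simp add: powr_mult powr_powr \<beta>(1))
  finally have "C0 * lam powr p * (4*pi) powr (-\<beta>) * (L\<^sup>2) powr (1 - \<beta>)
      = lam * (C0 * E powr (p - 1) * (\<epsilon> powr (p - 1) * L\<^sup>2))
        * ((4*pi) powr \<beta> * (4*pi) powr (-\<beta>)) * ((L\<^sup>2) powr \<beta> * (L\<^sup>2) powr (1 - \<beta>) / L\<^sup>2)"
    using L by (simp add: algebra_simps)
  also have "\<dots> = lam * (C0 * E powr (p - 1) * (\<epsilon> powr (p - 1) * L\<^sup>2))"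
    using L by (simp add: powr_add[symmetric])
  also have "\<dots> \<le> lam * ((\<beta> - 1) / 2)"
    using cond lam by (intro mult_left_mono) auto
  finally show ?thesis using \<beta>(2) by (simp add: divide_simps)
qed

lemma power2_less_of_less_mult_powr:
  fixes \<epsilon> L Cm q :: real
  assumes \<epsilon>: "0 < \<epsilon>" and L: "0 < L" and less: "L < Cm * \<epsilon> powr (- q / 2)"
  shows "\<epsilon> powr q * L\<^sup>2 < Cm\<^sup>2"
proof -
  have "L\<^sup>2 < (Cm * \<epsilon> powr (- q / 2))\<^sup>2"
    using L less by (intro power_strict_mono) auto
  also have "\<dots> = Cm\<^sup>2 * \<epsilon> powr (- q)"
    by (simp add: power_mult_distrib power2_eq_square powr_add[symmetric])
  finally have "\<epsilon> powr q * L\<^sup>2 < \<epsilon> powr q * (Cm\<^sup>2 * \<epsilon> powr (- q))"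
    using \<epsilon> by (intro mult_strict_left_mono) auto
  also have "\<dots> = Cm\<^sup>2"
    using \<epsilon> by (simp add: powr_add[symmetric] mult.left_commute[of "\<epsilon> powr q"])
  finally show ?thesis .
qed

lemma mild_solution_indicator_ball_le_heat_kernel:
  fixes u :: "real \<Rightarrow> 'a::euclidean_space \<Rightarrow> real"
  assumes C0: "C0 > 0" and f: "\<And>w. \<bar>f w\<bar> \<le> C0 * min \<bar>w\<bar> 1 powr p" and p: "p > 1"
    and \<beta>: "\<beta> = real DIM('a) * (p - 1) / 2" "\<beta> > 1" and \<epsilon>: "\<epsilon> > 0" and L: "L > 0"
    and small: "C0 * (2 * exp (1/4)) powr (p - 1) * (\<epsilon> powr (p - 1) * L\<^sup>2) \<le> (\<beta> - 1) / 2"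
    and u: "mild_solution f (\<lambda>x. \<epsilon> * indicator (ball 0 L) x) u" and t: "t > 0"
  shows "\<bar>u t x\<bar> \<le> 2 * exp (1/4) * \<epsilon> * (4*pi*L\<^sup>2) powr (real DIM('a) / 2) * heat_kernel (t + L\<^sup>2) x"
proof -
  define lam where "lam = 2 * exp (1/4) * \<epsilon> * (4*pi*L\<^sup>2) powr (real DIM('a) / 2)"
  have lam: "lam \<ge> 0" unfolding lam_def using \<epsilon> by simp
  have "C0 * lam powr p * (4*pi) powr (-\<beta>) * (L\<^sup>2) powr (1 - \<beta>) / (\<beta> - 1) \<le> lam / 2"
    unfolding lam_def using \<epsilon> L small by (intro gaussian_amplitude_small[OF \<beta>]) auto
  moreover have "\<bar>\<epsilon> * indicator (ball 0 L) y\<bar> \<le> lam / 2 * heat_kernel (L\<^sup>2) y" for y :: 'a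
    using mult_left_mono[OF indicator_ball_le_heat_kernel[OF L, of y], of \<epsilon>] \<epsilon>
    unfolding lam_def by (simp add: algebra_simps)
  ultimately show ?thesis
    using L t unfolding lam_def[symmetric]
    by (intro mild_solution_le_heat_kernel[OF C0 f p \<beta> _ lam _ _ u]) auto
qed

theorem theorem6p2:
  fixes f :: "real \<Rightarrow> real" and p :: real
  assumes "assumption_M f p"
    and "p > 1 + 2 / real DIM('a::euclidean_space)"
  shows "\<exists>Cm>0. \<forall>\<epsilon> L (u :: real \<Rightarrow> 'a \<Rightarrow> real).
           0 < \<epsilon> \<and> \<epsilon> \<le> 1 \<and> 0 < L \<and> L < Cm * \<epsilon> powr (- (p - 1) / 2) \<and>
           mild_solution f (\<lambda>x. \<epsilon> * indicator (ball 0 L) x) u \<longrightarrow>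
           (\<exists>K T. \<forall>t\<ge>T. \<forall>x. \<bar>u t x\<bar> \<le> K * t powr (- real DIM('a) / 2))"
proof -
  let ?N = "real DIM('a)"
  obtain C0 where C0: "C0 > 0" and f: "\<And>v. \<bar>f v\<bar> \<le> C0 * min \<bar>v\<bar> 1 powr p"
    using assumption_M_growth_bound[OF assms(1)] by blast
  have p: "p > 1" using assms(1) unfolding assumption_M_def by simp
  define \<beta> where "\<beta> = ?N * (p - 1) / 2"
  have \<beta>: "\<beta> > 1" using assms(2) unfolding \<beta>_def by (simp add: field_simps)
  define E where "E = 2 * exp (1/4::real)"
  define Cm where "Cm = sqrt ((\<beta> - 1) / (2 * C0 * E powr (p - 1)))"
  have Cm: "Cm > 0" and Cm_sq: "C0 * E powr (p - 1) * Cm\<^sup>2 = (\<beta> - 1) / 2"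
    unfolding Cm_def E_def using C0 \<beta> by simp_all
  show ?thesis
  proof (rule exI[of _ Cm], intro conjI allI impI Cm)
    fix \<epsilon> L and u :: "real \<Rightarrow> 'a \<Rightarrow> real"
    assume "0 < \<epsilon> \<and> \<epsilon> \<le> 1 \<and> 0 < L \<and> L < Cm * \<epsilon> powr (- (p - 1) / 2) \<and>
      mild_solution f (\<lambda>x. \<epsilon> * indicator (ball 0 L) x) u"
    then have \<epsilon>: "\<epsilon> > 0" and L: "L > 0" and "\<epsilon> powr (p - 1) * L\<^sup>2 < Cm\<^sup>2"
      and u: "mild_solution f (\<lambda>x. \<epsilon> * indicator (ball 0 L) x) u"
      using power2_less_of_less_mult_powr[of \<epsilon> L Cm "p - 1"] by auto
    then have "C0 * E powr (p - 1) * (\<epsilon> powr (p - 1) * L\<^sup>2) \<le> C0 * E powr (p - 1) * Cm\<^sup>2"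
      using C0 unfolding E_def by (intro mult_left_mono) auto
    then have small: "C0 * E powr (p - 1) * (\<epsilon> powr (p - 1) * L\<^sup>2) \<le> (\<beta> - 1) / 2"
      using Cm_sq by simp
    define K where "K = E * \<epsilon> * (4*pi*L\<^sup>2) powr (?N / 2) * (4*pi) powr (- ?N / 2)"
    have "\<bar>u t x\<bar> \<le> K * t powr (- ?N / 2)" if "t \<ge> 1" for t x
    proof -
      have "\<bar>u t x\<bar> \<le> E * \<epsilon> * (4*pi*L\<^sup>2) powr (?N / 2) * heat_kernel (t + L\<^sup>2) x"
        using mild_solution_indicator_ball_le_heat_kernel[OF C0 f p \<beta>_def \<beta> \<epsilon> L _ u] small that
        unfolding E_def by simp
      also have "\<dots> \<le> E * \<epsilon> * (4*pi*L\<^sup>2) powr (?N / 2) * ((4*pi) powr (- ?N / 2) * t powr (- ?N / 2))"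
        using \<epsilon> that unfolding E_def by (intro mult_left_mono heat_kernel_le_time_decay) auto
      finally show ?thesis unfolding K_def by (simp add: mult.assoc)
    qed
    then show "\<exists>K T. \<forall>t\<ge>T. \<forall>x. \<bar>u t x\<bar> \<le> K * t powr (- real DIM('a) / 2)"
      by blast
  qed
qed

end
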